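(* Let $\Phi$ be a real $N\times d$ matrix satisfying the Restricted Isometry Condition with parameters $(2n,\varepsilon)$, $\varepsilon = 0.03/\sqrt{\log n}$, let $v \ne 0$ be $n$-sparse, $x = \Phi v$, and consider an iteration of ROMP run on $x$ with sparsity level $n$, with $I$ the index set and $r\ne0$ the residual at the start of that iteration, $u = \Phi^* r$, and $J$ the set chosen in the identification step of that iteration. Let $v_0 = v|_{\mathrm{supp}(v)\setminus I}$ (equal to $v$ on $\mathrm{supp}(v)\setminus I$, $0$ elsewhere). Then $\|u|_J\|_2 \ge 0.8\,\|v_0\|_2$.
   Context: A vector is $n$-sparse if it has at most $n$ nonzero coordinates. $\Phi$ satisfies the Restricted Isometry Condition with parameters $(m,\varepsilon)$ if $(1-\varepsilon)\|w\|_2 \le \|\Phi w\|_2 \le (1+\varepsilon)\|w\|_2$ for all $m$-sparse $w$. $y|_T$ is the restriction of $y$ to coordinates in $T$. ROMP with input $x$ and sparsity level $n$: Initialize $I=\emptyset$, $r=x$. Repeat until $r=0$: (Identify) $u=\Phi^*r$, choose a set $J$ of the $n$ biggest coordinates of $u$ in magnitude, or all nonzero coordinates of $u$, whichever set is smaller; (Regularize) among subsets $J_0\subset J$ with $|u(i)|\le 2|u(j)|$ for all $i,j\in J_0$, choose one maximizing $\|u|_{J_0}\|_2$; (Update) $I\leftarrow I\cup J_0$, $y=\operatorname{argmin}_{z\in\mathbb{R}^I}\|x-\Phi z\|_2$, $r=x-\Phi y$. Output $I$. *)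

theory Defs
  imports "HOL-Analysis.Analysis"
begin

text \<open>Vectors in R^d are modelled as real^'d (index type 'd finite); an N x d real
matrix is real^'d^'N, and the adjoint Phi^* is transpose Phi.\<close>

definition supp :: "real^'d \<Rightarrow> 'd set" where
  "supp w = {i. w $ i \<noteq> 0}"

definition sparse :: "nat \<Rightarrow> real^'d \<Rightarrow> bool" where
  "sparse n w \<longleftrightarrow> card (supp w) \<le> n"

definition RIC :: "real^'d^'N \<Rightarrow> nat \<Rightarrow> real \<Rightarrow> bool" where
  "RIC Phi m eps \<longleftrightarrow> (\<forall>w. sparse m w \<longrightarrow>
      (1 - eps) * norm w \<le> norm (Phi *v w) \<and> norm (Phi *v w) \<le> (1 + eps) * norm w)"

definition restr :: "real^'d \<Rightarrow> 'd set \<Rightarrow> real^'d" where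
  "restr y T = (\<chi> i. if i \<in> T then y $ i else 0)"

definition lsq_residual :: "real^'d^'N \<Rightarrow> real^'N \<Rightarrow> 'd set \<Rightarrow> real^'N \<Rightarrow> bool" where
  "lsq_residual Phi x I r \<longleftrightarrow> (\<exists>y. supp y \<subseteq> I \<and> r = x - Phi *v y \<and>
      (\<forall>z. supp z \<subseteq> I \<longrightarrow> norm (x - Phi *v y) \<le> norm (x - Phi *v z)))"

definition romp_identify :: "nat \<Rightarrow> real^'d \<Rightarrow> 'd set \<Rightarrow> bool" where
  "romp_identify n u J \<longleftrightarrow> J \<subseteq> supp u \<and> card J = min n (card (supp u)) \<and>
      (\<forall>i\<in>J. \<forall>j. j \<notin> J \<longrightarrow> \<bar>u $ j\<bar> \<le> \<bar>u $ i\<bar>)"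

definition comparable :: "real^'d \<Rightarrow> 'd set \<Rightarrow> bool" where
  "comparable u J0 \<longleftrightarrow> (\<forall>i\<in>J0. \<forall>j\<in>J0. \<bar>u $ i\<bar> \<le> 2 * \<bar>u $ j\<bar>)"

definition romp_regularize :: "real^'d \<Rightarrow> 'd set \<Rightarrow> 'd set \<Rightarrow> bool" where
  "romp_regularize u J J0 \<longleftrightarrow> J0 \<subseteq> J \<and> comparable u J0 \<and>
      (\<forall>K. K \<subseteq> J \<longrightarrow> comparable u K \<longrightarrow> norm (restr u K) \<le> norm (restr u J0))"

text \<open>Index sets I occurring at the start of some iteration of ROMP on input x with
sparsity level n (iterations continue only while the residual is nonzero).\<close>
inductive romp_reach :: "real^'d^'N \<Rightarrow> real^'N \<Rightarrow> nat \<Rightarrow> 'd set \<Rightarrow> bool"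
  for Phi x n where
  init: "romp_reach Phi x n {}"
| step: "\<lbrakk> romp_reach Phi x n I; lsq_residual Phi x I r; r \<noteq> 0;
           u = transpose Phi *v r; romp_identify n u J; romp_regularize u J J0 \<rbrakk>
         \<Longrightarrow> romp_reach Phi x n (I \<union> J0)"

end

theory Submission
  imports Defs
begin

text \<open>Let y be the least-squares coefficient vector on I, so that the residual is r = \<Phi>w with
  w = v - y. As long as I lies mostly inside supp v, w is 2n-sparse. Since r is orthogonal to the
  columns indexed by I, the identity ||r||^2 = <\<Phi>^* r, w> only involves the coordinates in
  supp v - I, and the restricted isometry lower bound yields ||u|(supp v - I)|| \<ge> (1 - \<epsilon>)^2 ||w||
  \<ge> 0.9 ||w||; identification picks a set J at least as heavy, because |supp v - I| \<le> n.

  That I lies mostly inside supp v is an invariant of ROMP. A set J0 chosen by regularization avoids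
  I, and if most of it lay outside supp v, near-orthogonality of disjointly supported sparse vectors
  would bound the energy of u off supp v by 16 \<epsilon>^2 ||w||^2, and comparability the energy of all of
  u|J0 by five times that. But regularization keeps a 1/(6 log n) fraction of the energy of u|J,
  which is at least 0.81 ||w||^2; this contradicts \<epsilon>^2 log n = 0.0009.\<close>

lemma restr_nth [simp]: "restr y T $ i = (if i \<in> T then y $ i else 0)"
  by (simp add: restr_def)

lemma norm_restr_sq: "(norm (restr y T))\<^sup>2 = (\<Sum>i\<in>T. (y $ i)\<^sup>2)"
proof -
  have "(norm (restr y T))\<^sup>2 = (\<Sum>i\<in>UNIV. if i \<in> T then (y $ i)\<^sup>2 else 0)"
    unfolding power2_norm_eq_inner inner_vec_def by (rule sum.cong) (auto simp: power2_eq_square)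
  then show ?thesis
    by (simp add: sum.If_cases)
qed

lemma restr_UNIV [simp]: "restr y UNIV = y"
  by (simp add: vec_eq_iff)

lemma norm_restr_le_iff:
  "norm (restr y T) \<le> norm (restr y K) \<longleftrightarrow> (\<Sum>i\<in>T. (y $ i)\<^sup>2) \<le> (\<Sum>i\<in>K. (y $ i)\<^sup>2)"
  by (metis abs_le_square_iff abs_norm_cancel norm_restr_sq)

lemma norm_restr_le: "norm (restr y T) \<le> norm y"
  using norm_restr_le_iff[of y T UNIV] by (simp add: sum_mono2)

lemma supp_restr: "supp (restr y T) \<subseteq> T \<inter> supp y"
  by (auto simp: supp_def)

lemma supp_add: "supp (x + y) \<subseteq> supp x \<union> supp y"
  by (auto simp: supp_def)

lemma supp_diff: "supp (x - y) \<subseteq> supp x \<union> supp y"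
  by (auto simp: supp_def)

lemma supp_scaleR: "supp (c *\<^sub>R x) \<subseteq> supp x"
  by (auto simp: supp_def)

lemma sparse_if_supp_subset: "supp w \<subseteq> A \<Longrightarrow> card A \<le> m \<Longrightarrow> sparse m w"
  unfolding sparse_def by (meson card_mono finite order_trans)

lemma inner_eq_0_if_supp_disjoint: "supp x \<inter> supp y = {} \<Longrightarrow> x \<bullet> y = 0"
  unfolding inner_vec_def supp_def by (rule sum.neutral) auto

lemma inner_restr_eq: "supp z \<subseteq> T \<Longrightarrow> restr y T \<bullet> z = y \<bullet> z"
  unfolding inner_vec_def supp_def by (rule sum.cong) auto

lemma inner_transpose_mult:
  fixes A :: "real^'n^'m"
  shows "(transpose A *v r) \<bullet> z = r \<bullet> (A *v z)"
  by (simp add: dot_lmul_matrix)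

lemma sum_power2_le_if_dominated:
  fixes f :: "'a \<Rightarrow> real"
  assumes "finite B" "card A \<le> card B" "0 \<le> c"
    and dom: "\<And>a b. a \<in> A \<Longrightarrow> b \<in> B \<Longrightarrow> \<bar>f a\<bar> \<le> c * \<bar>f b\<bar>"
  shows "(\<Sum>a\<in>A. (f a)\<^sup>2) \<le> c\<^sup>2 * (\<Sum>b\<in>B. (f b)\<^sup>2)"
proof (cases "finite A \<and> B \<noteq> {}")
  case False
  then have "(\<Sum>a\<in>A. (f a)\<^sup>2) = 0"
    using assms(1,2) by (cases "finite A") auto
  then show ?thesis
    by (simp add: sum_nonneg)
next
  case True
  define b0 where "b0 = arg_min_on (\<lambda>b. \<bar>f b\<bar>) B"
  have b0: "b0 \<in> B" "\<And>b. b \<in> B \<Longrightarrow> \<bar>f b0\<bar> \<le> \<bar>f b\<bar>"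
    using arg_min_if_finite[OF assms(1), of "\<lambda>b. \<bar>f b\<bar>"] True unfolding b0_def
    by (auto simp: not_less)
  have "(\<Sum>a\<in>A. (f a)\<^sup>2) \<le> card A * (c * \<bar>f b0\<bar>)\<^sup>2"
    using dom[OF _ b0(1)] assms(3)
    by (intro sum_bounded_above) (auto simp: abs_le_square_iff[symmetric])
  also have "\<dots> \<le> card B * (c\<^sup>2 * (f b0)\<^sup>2)"
    using assms(2) by (simp add: power_mult_distrib mult_right_mono)
  also have "\<dots> \<le> c\<^sup>2 * (\<Sum>b\<in>B. (f b)\<^sup>2)"
    using sum_bounded_below[of B "c\<^sup>2 * (f b0)\<^sup>2" "\<lambda>b. c\<^sup>2 * (f b)\<^sup>2"] b0(2)
    by (simp add: sum_distrib_left mult_left_mono abs_le_square_iff)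
  finally show ?thesis .
qed

lemma card_Un_le_double_if_mostly_in:
  assumes "finite S" "finite I" "card (I - S) \<le> card (I \<inter> S)"
  shows "card (S \<union> I) \<le> 2 * card S"
proof -
  have "card (S \<union> I) = card S + card (I - S)"
    using assms(1,2) card_Un_disjoint[of S "I - S"] by (simp add: Un_Diff_cancel)
  moreover have "card (I \<inter> S) \<le> card S"
    using assms(1) by (simp add: card_mono)
  ultimately show ?thesis
    using assms(3) by linarith
qed

lemma linear_coeff_eq_0_if_quadratic_bound:
  fixes p A :: real
  assumes "\<And>t. 2 * t * p \<le> t\<^sup>2 * A"
  shows "p = 0"
proof (rule ccontr)
  assume "p \<noteq> 0"
  have "A \<ge> 0"
    using assms[of 1] assms[of "-1"] by simp
  define t where "t = p / (A + 1)"
  have "A + 1 > 0"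
    using \<open>A \<ge> 0\<close> by simp
  then have "p = t * (A + 1)" and "t \<noteq> 0"
    using \<open>p \<noteq> 0\<close> by (simp_all add: t_def)
  then have "2 * t * p = 2 * (A + 1) * t\<^sup>2"
    by (simp add: power2_eq_square)
  moreover have "t\<^sup>2 > 0"
    using \<open>t \<noteq> 0\<close> by simp
  moreover have "(A + 2) * t\<^sup>2 = 2 * (A + 1) * t\<^sup>2 - t\<^sup>2 * A"
    by (simp add: algebra_simps)
  ultimately show False
    using assms[of t] \<open>A \<ge> 0\<close> by (smt (verit) mult_pos_pos)
qed

lemma lsq_residual_orthogonal:
  fixes Phi :: "real^'d^'N"
  assumes "lsq_residual Phi x I r"
  obtains y where "supp y \<subseteq> I" "r = x - Phi *v y"
    "\<And>z. supp z \<subseteq> I \<Longrightarrow> r \<bullet> (Phi *v z) = 0"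
proof -
  obtain y where y: "supp y \<subseteq> I" "r = x - Phi *v y"
    and min: "\<And>z. supp z \<subseteq> I \<Longrightarrow> norm (x - Phi *v y) \<le> norm (x - Phi *v z)"
    using assms unfolding lsq_residual_def by blast
  have "r \<bullet> (Phi *v z) = 0" if z: "supp z \<subseteq> I" for z
  proof (rule linear_coeff_eq_0_if_quadratic_bound)
    fix t :: real
    have "supp (y + t *\<^sub>R z) \<subseteq> I"
      using supp_add[of y "t *\<^sub>R z"] supp_scaleR[of t z] y z by blast
    moreover have "x - Phi *v (y + t *\<^sub>R z) = r - t *\<^sub>R (Phi *v z)"
      by (simp add: y(2) algebra_simps)
    ultimately have "(norm r)\<^sup>2 \<le> (norm (r - t *\<^sub>R (Phi *v z)))\<^sup>2"
      using min y(2) by (metis norm_ge_zero power_mono)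
    then show "2 * t * (r \<bullet> (Phi *v z)) \<le> t\<^sup>2 * ((Phi *v z) \<bullet> (Phi *v z))"
      unfolding power2_norm_eq_inner
      by (simp add: inner_commute power2_eq_square algebra_simps)
  qed
  with y that show ?thesis by blast
qed

lemma lsq_residual_adjoint_vanishes:
  fixes Phi :: "real^'d^'N"
  assumes "lsq_residual Phi x I r" "i \<in> I"
  shows "(transpose Phi *v r) $ i = 0"
proof -
  have "supp (axis i 1) \<subseteq> I"
    using assms(2) by (auto simp: supp_def axis_def)
  then have "r \<bullet> (Phi *v axis i 1) = 0"
    using lsq_residual_orthogonal[OF assms(1)] by metis
  then show ?thesis
    by (metis cart_eq_inner_axis inner_transpose_mult)
qed

lemma RIC_norm_sq_bounds:
  fixes Phi :: "real^'d^'N"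
  assumes "RIC Phi m e" "e \<le> 1" "sparse m w"
  shows "(1 - e)\<^sup>2 * (norm w)\<^sup>2 \<le> (norm (Phi *v w))\<^sup>2"
    and "(norm (Phi *v w))\<^sup>2 \<le> (1 + e)\<^sup>2 * (norm w)\<^sup>2"
proof -
  have "(1 - e) * norm w \<le> norm (Phi *v w)" "norm (Phi *v w) \<le> (1 + e) * norm w"
    using assms(1,3) unfolding RIC_def by auto
  then show "(1 - e)\<^sup>2 * (norm w)\<^sup>2 \<le> (norm (Phi *v w))\<^sup>2"
    and "(norm (Phi *v w))\<^sup>2 \<le> (1 + e)\<^sup>2 * (norm w)\<^sup>2"
    using assms(2) by (simp_all add: power_mult_distrib[symmetric] power_mono)
qed

lemma RIC_inner_le_if_supp_disjoint:
  fixes Phi :: "real^'d^'N"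
  assumes "RIC Phi m e" "e \<le> 1" "supp x \<inter> supp z = {}" "card (supp x \<union> supp z) \<le> m"
  shows "(Phi *v x) \<bullet> (Phi *v z) \<le> 2 * e * norm x * norm z"
proof -
  \<comment> \<open>polarization for the orthogonal vectors a and b, which have equal norms\<close>
  define a where "a = norm z *\<^sub>R x"
  define b where "b = norm x *\<^sub>R z"
  define c where "c = norm x * norm z"
  have sparse: "sparse m (a + b)" "sparse m (a - b)"
    using supp_add[of a b] supp_diff[of a b] supp_scaleR[of _ x] supp_scaleR[of _ z] assms(4)
    unfolding a_def b_def by (meson Un_mono order_trans sparse_if_supp_subset)+
  have "a \<bullet> b = 0"
    using inner_eq_0_if_supp_disjoint[OF assms(3)] by (simp add: a_def b_def)
  moreover have "(norm a)\<^sup>2 = c\<^sup>2" "(norm b)\<^sup>2 = c\<^sup>2"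
    by (simp_all add: a_def b_def c_def power_mult_distrib mult.commute)
  ultimately have sq: "(norm (a + b))\<^sup>2 = 2 * c\<^sup>2" "(norm (a - b))\<^sup>2 = 2 * c\<^sup>2"
    using dot_norm[of a b] dot_norm_neg[of a b] by simp_all
  have "4 * ((Phi *v a) \<bullet> (Phi *v b)) = (norm (Phi *v (a + b)))\<^sup>2 - (norm (Phi *v (a - b)))\<^sup>2"
    using dot_norm[of "Phi *v a" "Phi *v b"] dot_norm_neg[of "Phi *v a" "Phi *v b"]
    by (simp add: matrix_vector_right_distrib matrix_vector_mult_diff_distrib)
  also have "\<dots> \<le> (1 + e)\<^sup>2 * (2 * c\<^sup>2) - (1 - e)\<^sup>2 * (2 * c\<^sup>2)"
    using RIC_norm_sq_bounds[OF assms(1,2) sparse(1)] RIC_norm_sq_bounds[OF assms(1,2) sparse(2)]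
    unfolding sq by linarith
  also have "\<dots> = 4 * c * (2 * e * c)"
    by (simp add: power2_eq_square algebra_simps)
  finally have "c * ((Phi *v x) \<bullet> (Phi *v z)) \<le> c * (2 * e * c)"
    by (simp add: a_def b_def c_def matrix_vector_mult_scaleR algebra_simps)
  then show ?thesis
    by (cases "c = 0") (auto simp: c_def mult_le_cancel_left_pos)
qed

lemma RIC_inner_le_if_supp_disjoint_2n:
  fixes Phi :: "real^'d^'N"
  assumes "RIC Phi (2 * n) e" "0 \<le> e" "e \<le> 1" "supp w \<inter> supp z = {}"
    and "card (supp w) \<le> 2 * n" "card (supp z) \<le> n"
  shows "(Phi *v w) \<bullet> (Phi *v z) \<le> 4 * e * norm w * norm z"
proof -
  obtain W where W: "W \<subseteq> supp w" "card W \<le> n" "card (supp w - W) \<le> n"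
  proof (cases "card (supp w) \<le> n")
    case True
    then show ?thesis
      using that[of "supp w"] by simp
  next
    case False
    then obtain W where "W \<subseteq> supp w" "card W = n"
      using obtain_subset_with_card_n[of n "supp w"] by auto
    then show ?thesis
      using that[of W] assms(5) by (simp add: card_Diff_subset)
  qed
  have bound: "(Phi *v restr w A) \<bullet> (Phi *v z) \<le> 2 * e * norm w * norm z"
    if "A \<subseteq> supp w" "card A \<le> n" for A
  proof -
    have "card (supp (restr w A) \<union> supp z) \<le> card (A \<union> supp z)"
      using supp_restr[of w A] by (intro card_mono) auto
    also have "\<dots> \<le> 2 * n"
      using card_Un_le[of A "supp z"] that(2) assms(6) by linarith
    finally have "card (supp (restr w A) \<union> supp z) \<le> 2 * n" .
    moreover have "supp (restr w A) \<inter> supp z = {}"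
      using supp_restr[of w A] that(1) assms(4) by blast
    ultimately have "(Phi *v restr w A) \<bullet> (Phi *v z) \<le> 2 * e * norm (restr w A) * norm z"
      using RIC_inner_le_if_supp_disjoint[OF assms(1,3)] by blast
    also have "\<dots> \<le> 2 * e * norm w * norm z"
      using assms(2) norm_restr_le by (intro mult_right_mono mult_left_mono) auto
    finally show ?thesis .
  qed
  have "w = restr w W + restr w (supp w - W)"
    using W(1) by (auto simp: vec_eq_iff supp_def)
  then have "(Phi *v w) \<bullet> (Phi *v z)
      = (Phi *v restr w W) \<bullet> (Phi *v z) + (Phi *v restr w (supp w - W)) \<bullet> (Phi *v z)"
    by (metis inner_add_left matrix_vector_right_distrib)
  also have "\<dots> \<le> 4 * e * norm w * norm z"
    using bound[OF W(1,2)] bound[OF _ W(3)] by simp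
  finally show ?thesis .
qed

lemma romp_identify_dominates:
  assumes "romp_identify n u J" "card T \<le> n"
  shows "(\<Sum>i\<in>T. (u $ i)\<^sup>2) \<le> (\<Sum>i\<in>J. (u $ i)\<^sup>2)"
proof -
  have J: "J \<subseteq> supp u" "card J = min n (card (supp u))"
    and top: "\<And>i j. i \<in> J \<Longrightarrow> j \<notin> J \<Longrightarrow> \<bar>u $ j\<bar> \<le> \<bar>u $ i\<bar>"
    using assms(1) unfolding romp_identify_def by auto
  show ?thesis
  proof (cases "J = supp u")
    case True
    have "(\<Sum>i\<in>T. (u $ i)\<^sup>2) = (\<Sum>i\<in>T \<inter> supp u. (u $ i)\<^sup>2)"
      by (rule sum.mono_neutral_right) (auto simp: supp_def)
    also have "\<dots> \<le> (\<Sum>i\<in>J. (u $ i)\<^sup>2)"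
      using True by (intro sum_mono2) auto
    finally show ?thesis .
  next
    case False
    then have "card J < card (supp u)"
      using J(1) by (simp add: psubset_card_mono)
    then have "card J = n"
      using J(2) by linarith
    moreover have "card T = card (T \<inter> J) + card (T - J)"
      "card J = card (T \<inter> J) + card (J - T)"
      using card_Int_Diff[of T J] card_Int_Diff[of J T] by (simp_all add: Int_commute)
    ultimately have "card (T - J) \<le> card (J - T)"
      using assms(2) by linarith
    then have "(\<Sum>i\<in>T - J. (u $ i)\<^sup>2) \<le> 1\<^sup>2 * (\<Sum>i\<in>J - T. (u $ i)\<^sup>2)"
      using top by (intro sum_power2_le_if_dominated) auto
    moreover have
      "(\<Sum>i\<in>T. (u $ i)\<^sup>2) = (\<Sum>i\<in>T \<inter> J. (u $ i)\<^sup>2) + (\<Sum>i\<in>T - J. (u $ i)\<^sup>2)"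
      "(\<Sum>i\<in>J. (u $ i)\<^sup>2) = (\<Sum>i\<in>T \<inter> J. (u $ i)\<^sup>2) + (\<Sum>i\<in>J - T. (u $ i)\<^sup>2)"
      using sum.Int_Diff[of T _ J] sum.Int_Diff[of J _ T] by (simp_all add: Int_commute)
    ultimately show ?thesis
      by simp
  qed
qed

lemma romp_regularize_le:
  assumes "romp_regularize u J J0" "K \<subseteq> J" "comparable u K"
  shows "(\<Sum>i\<in>K. (u $ i)\<^sup>2) \<le> (\<Sum>i\<in>J0. (u $ i)\<^sup>2)"
  using assms norm_restr_le_iff unfolding romp_regularize_def by blast

text \<open>Each dyadic layer t/2^(k+1) < |u i| \<le> t/2^k of J is comparable, so it carries at most the
  energy of J0.\<close>
lemma romp_regularize_layers:
  assumes "romp_regularize u J J0" "0 \<le> t"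
  shows "(\<Sum>i\<in>{i\<in>J. \<bar>u $ i\<bar> \<le> t}. (u $ i)\<^sup>2)
          \<le> real m * (\<Sum>i\<in>J0. (u $ i)\<^sup>2) + card J * (t / 2 ^ m)\<^sup>2"
  using assms(2)
proof (induction m arbitrary: t)
  case 0
  have "(\<Sum>i\<in>{i\<in>J. \<bar>u $ i\<bar> \<le> t}. (u $ i)\<^sup>2) \<le> card {i\<in>J. \<bar>u $ i\<bar> \<le> t} * t\<^sup>2"
    using 0 by (intro sum_bounded_above) (auto simp: abs_le_square_iff[symmetric])
  also have "\<dots> \<le> card J * t\<^sup>2"
    by (intro mult_right_mono) (auto intro: card_mono)
  finally show ?case
    by simp
next
  case (Suc m)
  let ?B = "{i\<in>J. t / 2 < \<bar>u $ i\<bar> \<and> \<bar>u $ i\<bar> \<le> t}"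
  let ?C = "{i\<in>J. \<bar>u $ i\<bar> \<le> t / 2}"
  have "{i\<in>J. \<bar>u $ i\<bar> \<le> t} = ?B \<union> ?C"
    by auto
  then have "(\<Sum>i\<in>{i\<in>J. \<bar>u $ i\<bar> \<le> t}. (u $ i)\<^sup>2)
      = (\<Sum>i\<in>?B. (u $ i)\<^sup>2) + (\<Sum>i\<in>?C. (u $ i)\<^sup>2)"
    by (simp add: sum.union_disjoint[symmetric] disjoint_iff)
  moreover have "(\<Sum>i\<in>?B. (u $ i)\<^sup>2) \<le> (\<Sum>i\<in>J0. (u $ i)\<^sup>2)"
    using assms(1) by (rule romp_regularize_le) (auto simp: comparable_def)
  moreover have "(\<Sum>i\<in>?C. (u $ i)\<^sup>2)
      \<le> real m * (\<Sum>i\<in>J0. (u $ i)\<^sup>2) + card J * (t / 2 ^ Suc m)\<^sup>2"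
    using Suc.IH[of "t / 2"] Suc.prems by simp
  ultimately show ?case
    by (simp add: algebra_simps)
qed

lemma pow2_less_imp_le_ln:
  assumes "2 ^ k < n" "2 \<le> n"
  shows "real k + 2 \<le> 6 * ln (real n)"
proof -
  have "real k * ln 2 < ln (real n)"
    using assms(1) ln_less_cancel_iff[of "2 ^ k" "real n"] by (simp add: ln_realpow)
  moreover have "ln 2 \<le> ln (real n)"
    using assms(2) by simp
  moreover have "real k * (2 / 3) \<le> real k * ln 2"
    using ln2_ge_two_thirds by (intro mult_left_mono) simp_all
  ultimately show ?thesis
    using ln2_ge_two_thirds by linarith
qed

lemma sum_power2_le_five_times_Diff_if_comparable:
  assumes "comparable u J0" "card (J0 \<inter> S) \<le> card (J0 - S)"
  shows "(\<Sum>i\<in>J0. (u $ i)\<^sup>2) \<le> 5 * (\<Sum>i\<in>J0 - S. (u $ i)\<^sup>2)"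
proof -
  have "(\<Sum>i\<in>J0 \<inter> S. (u $ i)\<^sup>2) \<le> 2\<^sup>2 * (\<Sum>i\<in>J0 - S. (u $ i)\<^sup>2)"
    using assms by (intro sum_power2_le_if_dominated) (auto simp: comparable_def)
  moreover have "(\<Sum>i\<in>J0. (u $ i)\<^sup>2) = (\<Sum>i\<in>J0 \<inter> S. (u $ i)\<^sup>2) + (\<Sum>i\<in>J0 - S. (u $ i)\<^sup>2)"
    by (rule sum.Int_Diff) simp
  ultimately show ?thesis
    by simp
qed

lemma romp_regularize_energy:
  assumes reg: "romp_regularize u J J0" and "card J \<le> n" "2 \<le> n"
  shows "(\<Sum>i\<in>J. (u $ i)\<^sup>2) \<le> 6 * ln (real n) * (\<Sum>i\<in>J0. (u $ i)\<^sup>2)"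
proof (cases "J = {}")
  case True
  then show ?thesis
    using assms(3) by (simp add: sum_nonneg)
next
  case False
  define E where "E = (\<Sum>i\<in>J0. (u $ i)\<^sup>2)"
  define M where "M = Max ((\<lambda>i. \<bar>u $ i\<bar>) ` J)"
  have "M \<in> (\<lambda>i. \<bar>u $ i\<bar>) ` J"
    unfolding M_def using False by (intro Max_in) auto
  then obtain i0 where i0: "i0 \<in> J" "M = \<bar>u $ i0\<bar>"
    by blast
  have M_ge: "\<bar>u $ i\<bar> \<le> M" if "i \<in> J" for i
    using that unfolding M_def by simp
  have "(\<Sum>i\<in>{i0}. (u $ i)\<^sup>2) \<le> E"
    unfolding E_def using i0(1) by (intro romp_regularize_le[OF reg]) (auto simp: comparable_def)
  then have M_E: "M\<^sup>2 \<le> E"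
    using i0(2) by simp
  obtain k where k: "2 ^ k < n" "n \<le> 2 ^ (k + 1)"
    using ex_power_ivl2[of 2 n] assms(3) by auto
  have "{i\<in>J. \<bar>u $ i\<bar> \<le> M} = J"
    using M_ge by auto
  then have "(\<Sum>i\<in>J. (u $ i)\<^sup>2) \<le> real (k + 1) * E + card J * (M / 2 ^ (k + 1))\<^sup>2"
    using romp_regularize_layers[OF reg, of M "k + 1"] i0(2) unfolding E_def by simp
  also have "card J * (M / 2 ^ (k + 1))\<^sup>2 \<le> 2 ^ (k + 1) * (M / 2 ^ (k + 1))\<^sup>2"
    using assms(2) k(2) of_nat_mono[of "card J" "2 ^ (k + 1)"] by (intro mult_right_mono) simp_all
  also have "\<dots> = M\<^sup>2 / 2 ^ (k + 1)"
    by (simp add: power2_eq_square)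
  also have "\<dots> \<le> M\<^sup>2"
    using one_le_power[of "2::real" "k + 1"] by (simp add: divide_le_eq mult_le_cancel_left1)
  finally have "(\<Sum>i\<in>J. (u $ i)\<^sup>2) \<le> (real k + 2) * E"
    using M_E by (simp add: algebra_simps)
  with pow2_less_imp_le_ln[OF k(1) assms(3)] show ?thesis
    using E_def mult_right_mono[OF _ sum_nonneg] by (smt (verit) zero_le_power2)
qed

lemma romp_eps_nonneg: "0 \<le> 0.03 / sqrt (ln (real n))"
  by (cases n) simp_all

lemma romp_eps_pos_imp_two_le:
  assumes "0 < 0.03 / sqrt (ln (real n))"
  shows "2 \<le> n"
proof (rule ccontr)
  assume "\<not> 2 \<le> n"
  then have "ln (real n) = 0"
    by (cases n) auto
  with assms show False
    by simp
qed

lemma romp_eps_sq: "(0.03 / sqrt (ln (real n)))\<^sup>2 = (0.0009::real) / ln (real n)"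
proof (cases "n = 0")
  case False
  then have "0 \<le> ln (real n)"
    by simp
  then show ?thesis
    by (simp add: power_divide)
qed simp

lemma romp_eps_le: "0.03 / sqrt (ln (real n)) \<le> (0.05::real)"
proof (cases "n \<le> 1")
  case True
  then have "ln (real n) = 0"
    by (cases n) auto
  then show ?thesis
    by simp
next
  case False
  then have "2 / 3 \<le> ln (real n)"
    using ln2_ge_two_thirds ln_le_cancel_iff[of 2 "real n"] by linarith
  then have "(0.03 / sqrt (ln (real n)))\<^sup>2 \<le> (0.05::real)\<^sup>2"
    unfolding romp_eps_sq by (simp add: divide_le_eq power2_eq_square)
  then show ?thesis
    by (rule power2_le_imp_le) simp
qed

lemma romp_eps_sq_mult_ln: "2 \<le> n \<Longrightarrow> (0.03 / sqrt (ln (real n)))\<^sup>2 * ln (real n) = 0.0009"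
  unfolding romp_eps_sq by simp

lemma lsq_residual_correlation:
  fixes Phi :: "real^'d^'N"
  assumes RIC: "RIC Phi (2 * n) e" "e \<le> 1" and card: "card (supp v \<union> I) \<le> 2 * n"
    and lsq: "lsq_residual Phi (Phi *v v) I r" and u: "u = transpose Phi *v r"
  obtains w where "r = Phi *v w" "supp w \<subseteq> supp v \<union> I"
    "norm (restr v (supp v - I)) \<le> norm w"
    "(1 - e)\<^sup>2 * norm w \<le> norm (restr u (supp v - I))"
proof -
  obtain y where y: "supp y \<subseteq> I" "r = Phi *v v - Phi *v y"
    using lsq_residual_orthogonal[OF lsq] by blast
  define w where "w = v - y"
  define T where "T = supp v - I"
  have r: "r = Phi *v w"
    by (simp add: w_def y(2) matrix_vector_mult_diff_distrib)
  have supp_w: "supp w \<subseteq> supp v \<union> I"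
    using supp_diff[of v y] y(1) unfolding w_def by blast
  have "restr v T = restr w T"
    using y(1) by (auto simp: vec_eq_iff w_def T_def supp_def)
  then have v_w: "norm (restr v T) \<le> norm w"
    by (simp add: norm_restr_le)
  have "(norm r)\<^sup>2 = u \<bullet> w"
    unfolding u r by (simp only: power2_norm_eq_inner inner_transpose_mult)
  also have "\<dots> = restr u T \<bullet> w"
    using supp_w lsq_residual_adjoint_vanishes[OF lsq] unfolding inner_vec_def u T_def supp_def
    by (intro sum.cong) auto
  also have "\<dots> \<le> norm (restr u T) * norm w"
    by (rule norm_cauchy_schwarz)
  finally have "(norm r)\<^sup>2 \<le> norm (restr u T) * norm w" .
  moreover have "(1 - e)\<^sup>2 * (norm w)\<^sup>2 \<le> (norm r)\<^sup>2"
    using RIC_norm_sq_bounds(1)[OF RIC] sparse_if_supp_subset[OF supp_w card] r by simp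
  ultimately have "((1 - e)\<^sup>2 * norm w) * norm w \<le> norm (restr u T) * norm w"
    by (simp add: power2_eq_square mult.assoc)
  then have "(1 - e)\<^sup>2 * norm w \<le> norm (restr u T)"
    by (cases "w = 0") (simp_all add: mult_le_cancel_right)
  with r supp_w v_w that show ?thesis
    unfolding T_def by blast
qed

lemma RIC_adjoint_energy_off_support:
  fixes Phi :: "real^'d^'N"
  assumes RIC: "RIC Phi (2 * n) e" "0 \<le> e" "e \<le> 1"
    and "card (supp w) \<le> 2 * n" "card K \<le> n" "K \<inter> supp w = {}"
  shows "norm (restr (transpose Phi *v (Phi *v w)) K) \<le> 4 * e * norm w"
proof -
  define z where "z = restr (transpose Phi *v (Phi *v w)) K"
  have "supp z \<subseteq> K"
    using supp_restr unfolding z_def by blast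
  then have "card (supp z) \<le> n" "supp w \<inter> supp z = {}"
    using card_mono[of K "supp z"] assms(5,6) by auto
  have "(norm z)\<^sup>2 = (transpose Phi *v (Phi *v w)) \<bullet> z"
    using inner_restr_eq[OF \<open>supp z \<subseteq> K\<close>] by (simp add: power2_norm_eq_inner z_def)
  also have "\<dots> \<le> 4 * e * norm w * norm z"
    unfolding inner_transpose_mult
    by (rule RIC_inner_le_if_supp_disjoint_2n[OF RIC]) fact+
  finally show ?thesis
    unfolding z_def[symmetric] using assms(2)
    by (cases "z = 0") (simp_all add: power2_eq_square)
qed

lemma romp_identify_correlation:
  fixes Phi :: "real^'d^'N"
  assumes RIC: "RIC Phi (2 * n) (0.03 / sqrt (ln (real n)))" and "sparse n v"
    and card: "card (supp v \<union> I) \<le> 2 * n"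
    and lsq: "lsq_residual Phi (Phi *v v) I r" and u: "u = transpose Phi *v r"
    and J: "romp_identify n u J"
  obtains w where "r = Phi *v w" "supp w \<subseteq> supp v \<union> I"
    "norm (restr v (supp v - I)) \<le> norm w" "0.9 * norm w \<le> norm (restr u J)"
proof -
  let ?e = "0.03 / sqrt (ln (real n)) :: real"
  have "?e \<le> 1"
    using romp_eps_le[of n] by simp
  then obtain w where w: "r = Phi *v w" "supp w \<subseteq> supp v \<union> I"
    "norm (restr v (supp v - I)) \<le> norm w"
    "(1 - ?e)\<^sup>2 * norm w \<le> norm (restr u (supp v - I))"
    using lsq_residual_correlation[OF RIC _ card lsq u] by blast
  have "card (supp v - I) \<le> n"
    using \<open>sparse n v\<close> card_Diff1_le[of "supp v"] unfolding sparse_def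
    by (meson Diff_subset card_mono finite le_trans)
  then have "norm (restr u (supp v - I)) \<le> norm (restr u J)"
    using romp_identify_dominates[OF J] norm_restr_le_iff by blast
  moreover have "(0.95::real)\<^sup>2 \<le> (1 - ?e)\<^sup>2"
    using romp_eps_le[of n] by (intro power_mono) simp_all
  then have "0.9 * norm w \<le> (1 - ?e)\<^sup>2 * norm w"
    by (intro mult_right_mono) (simp_all add: power2_eq_square)
  ultimately show ?thesis
    using that[OF w(1-3)] w(4) by linarith
qed

lemma romp_regularize_disjoint:
  fixes Phi :: "real^'d^'N"
  assumes "lsq_residual Phi x I r" "u = transpose Phi *v r"
    and "romp_identify n u J" "romp_regularize u J J0"
  shows "J0 \<inter> I = {}"
proof -
  have "J0 \<subseteq> supp u"
    using assms(3,4) unfolding romp_regularize_def romp_identify_def by auto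
  moreover have "I \<inter> supp u = {}"
    using lsq_residual_adjoint_vanishes[OF assms(1)] assms(2) by (auto simp: supp_def)
  ultimately show ?thesis
    by blast
qed

lemma romp_regularize_energy_off_support:
  fixes Phi :: "real^'d^'N"
  assumes RIC: "RIC Phi (2 * n) e" "0 \<le> e" "e \<le> 1" and card: "card (supp v \<union> I) \<le> 2 * n"
    and lsq: "lsq_residual Phi (Phi *v v) I r" and u: "u = transpose Phi *v r"
    and J: "romp_identify n u J" and J0: "romp_regularize u J J0"
    and w: "r = Phi *v w" "supp w \<subseteq> supp v \<union> I"
  shows "(\<Sum>i\<in>J0 - supp v. (u $ i)\<^sup>2) \<le> 16 * e\<^sup>2 * (norm w)\<^sup>2"
proof -
  have "J0 - supp v \<subseteq> J" "card J \<le> n"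
    using J J0 unfolding romp_regularize_def romp_identify_def by auto
  then have "card (J0 - supp v) \<le> n"
    using card_mono[of J "J0 - supp v"] by simp
  moreover have "card (supp w) \<le> 2 * n"
    using card_mono[OF _ w(2)] card by simp
  moreover have "(J0 - supp v) \<inter> supp w = {}"
    using romp_regularize_disjoint[OF lsq u J J0] w(2) by auto
  ultimately have "norm (restr u (J0 - supp v)) \<le> 4 * e * norm w"
    using RIC_adjoint_energy_off_support[OF RIC] unfolding u w(1) by blast
  then have "(norm (restr u (J0 - supp v)))\<^sup>2 \<le> (4 * e * norm w)\<^sup>2"
    by (intro power_mono) simp_all
  then show ?thesis
    by (simp add: norm_restr_sq power_mult_distrib)
qed

lemma romp_regularize_mostly_in_support:
  fixes Phi :: "real^'d^'N"
  assumes RIC: "RIC Phi (2 * n) (0.03 / sqrt (ln (real n)))" and "sparse n v"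
    and card: "card (supp v \<union> I) \<le> 2 * n"
    and lsq: "lsq_residual Phi (Phi *v v) I r" and u: "u = transpose Phi *v r"
    and J: "romp_identify n u J" and J0: "romp_regularize u J J0"
  shows "card (J0 - supp v) \<le> card (J0 \<inter> supp v)"
proof (rule ccontr)
  assume off: "\<not> card (J0 - supp v) \<le> card (J0 \<inter> supp v)"
  define e :: real where "e = 0.03 / sqrt (ln (real n))"
  let ?E = "\<lambda>A. \<Sum>i\<in>A. (u $ i)\<^sup>2"
  obtain w where w: "r = Phi *v w" "supp w \<subseteq> supp v \<union> I" "0.9 * norm w \<le> norm (restr u J)"
    using romp_identify_correlation[OF RIC \<open>sparse n v\<close> card lsq u J] by blast
  have "0 \<le> e" "e \<le> 1"
    using romp_eps_nonneg[of n] romp_eps_le[of n] unfolding e_def by simp_all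
  from romp_regularize_energy_off_support[OF RIC[folded e_def] this card lsq u J J0 w(1,2)]
  have energy_off: "?E (J0 - supp v) \<le> 16 * e\<^sup>2 * (norm w)\<^sup>2" .
  have "J0 - supp v \<subseteq> supp u"
    using J J0 unfolding romp_regularize_def romp_identify_def by auto
  moreover have "J0 - supp v \<noteq> {}"
    using off by (metis card.empty zero_le)
  ultimately have "0 < ?E (J0 - supp v)"
    by (intro sum_pos) (auto simp: supp_def)
  then have "0 < e\<^sup>2 * (norm w)\<^sup>2"
    using energy_off by linarith
  then have "2 \<le> n" "0 < (norm w)\<^sup>2"
    using romp_eps_nonneg[of n] romp_eps_pos_imp_two_le[of n] unfolding e_def
    by (auto simp: zero_less_mult_iff)
  have "?E J0 \<le> 5 * ?E (J0 - supp v)"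
    using J0 off unfolding romp_regularize_def
    by (intro sum_power2_le_five_times_Diff_if_comparable) simp_all
  with energy_off have energy_J0: "?E J0 \<le> 80 * e\<^sup>2 * (norm w)\<^sup>2"
    by simp
  have "card J \<le> n"
    using J unfolding romp_identify_def by simp
  from romp_regularize_energy[OF J0 this \<open>2 \<le> n\<close>]
  have "?E J \<le> 6 * ln (real n) * ?E J0" .
  also have "\<dots> \<le> 6 * ln (real n) * (80 * e\<^sup>2 * (norm w)\<^sup>2)"
    using energy_J0 \<open>2 \<le> n\<close> by (intro mult_left_mono) simp_all
  also have "\<dots> = 480 * (e\<^sup>2 * ln (real n)) * (norm w)\<^sup>2"
    by (simp add: algebra_simps)
  also have "\<dots> = 54 / 125 * (norm w)\<^sup>2"
    unfolding romp_eps_sq_mult_ln[OF \<open>2 \<le> n\<close>, folded e_def] by simp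
  finally have upper: "?E J \<le> 54 / 125 * (norm w)\<^sup>2" .
  have "(0.9 * norm w)\<^sup>2 \<le> (norm (restr u J))\<^sup>2"
    using w(3) by (intro power_mono) simp_all
  then have "81 / 100 * (norm w)\<^sup>2 \<le> ?E J"
    unfolding norm_restr_sq power_mult_distrib by (simp add: power_divide)
  with upper \<open>0 < (norm w)\<^sup>2\<close> show False
    by linarith
qed

lemma romp_reach_mostly_in_support:
  fixes Phi :: "real^'d^'N"
  assumes RIC: "RIC Phi (2 * n) (0.03 / sqrt (ln (real n)))" and "sparse n v"
    and "romp_reach Phi (Phi *v v) n I"
  shows "card (I - supp v) \<le> card (I \<inter> supp v)"
  using assms(3)
proof (induction rule: romp_reach.induct)
  case init
  then show ?case
    by simp
next
  case (step I r u J J0)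
  have "card (supp v \<union> I) \<le> 2 * n"
    using card_Un_le_double_if_mostly_in[OF _ _ step.IH] \<open>sparse n v\<close>
    unfolding sparse_def by simp
  then have new: "J0 \<inter> I = {}" "card (J0 - supp v) \<le> card (J0 \<inter> supp v)"
    using romp_regularize_disjoint[OF step.hyps(2,4-6)]
      romp_regularize_mostly_in_support[OF RIC \<open>sparse n v\<close> _ step.hyps(2,4-6)] by simp_all
  have "card ((I - supp v) \<union> (J0 - supp v)) = card (I - supp v) + card (J0 - supp v)"
    using new(1) by (intro card_Un_disjoint) auto
  moreover have
    "card ((I \<inter> supp v) \<union> (J0 \<inter> supp v)) = card (I \<inter> supp v) + card (J0 \<inter> supp v)"
    using new(1) by (intro card_Un_disjoint) auto
  ultimately show ?case
    using step.IH new(2) by (simp add: Un_Diff Int_Un_distrib2)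
qed

theorem lemma3p6:
  fixes Phi :: "real^'d^'N" and v :: "real^'d" and n :: nat
    and I J :: "'d set" and r :: "real^'N" and u :: "real^'d"
  assumes "RIC Phi (2 * n) (0.03 / sqrt (ln (real n)))"
    and "v \<noteq> 0" and "sparse n v"
    and "romp_reach Phi (Phi *v v) n I"
    and "lsq_residual Phi (Phi *v v) I r" and "r \<noteq> 0"
    and "u = transpose Phi *v r"
    and "romp_identify n u J"
  shows "norm (restr u J) \<ge> 0.8 * norm (restr v (supp v - I))"
proof -
  have "card (I - supp v) \<le> card (I \<inter> supp v)"
    using romp_reach_mostly_in_support[OF assms(1,3,4)] .
  then have "card (supp v \<union> I) \<le> 2 * card (supp v)"
    by (intro card_Un_le_double_if_mostly_in) simp_all
  then have card: "card (supp v \<union> I) \<le> 2 * n"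
    using assms(3) unfolding sparse_def by linarith
  show ?thesis
  proof (rule romp_identify_correlation[OF assms(1,3) card assms(5,7,8)])
    fix w :: "real^'d"
    assume "r = Phi *v w" "supp w \<subseteq> supp v \<union> I"
      and "norm (restr v (supp v - I)) \<le> norm w" "0.9 * norm w \<le> norm (restr u J)"
    then show ?thesis
      using norm_ge_zero[of "restr v (supp v - I)"] by linarith
  qed
qed

end
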